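(* Fix $n\in\mathbb Z_{\ge2}$. Let $(\pi,\mathfrak c)$ be an inherited coloured permutation (for $\searrow_n$), let $(y,f)$ be an active site of $(\pi,\mathfrak c)$, and let $i\in[|\pi|]$. Then: (1) if $\mathfrak c(i)\ge f$, then $y>\pi(i)$; (2) if $\pi(i)<y$ and $\mathfrak c(i)<f$, then there exists $k>i$ with $\pi(k)\ge y$ and $\mathfrak c(k)=\mathfrak c(i)$; (3) if $\pi(i)<y$ and $\mathfrak c(i)<f$, then there exists $h>i$ with $\pi(h)\ge y$ and $\mathfrak c(h)=f-1$.
   Context: $\searrow_n=n(n-1)\cdots1$; $\mathrm{Av}(\searrow_n)$ is the set of permutations with no (not necessarily consecutive) occurrence of $\searrow_n$, $\mathrm{Av}_m(\searrow_n)$ those of size $m$. For $\pi\in\mathcal S_m$ and $y\in[m+1]$, $\pi^{*y}$ is the permutation of $[m+1]$ with entries in the same relative order as $\pi(1),\dots,\pi(m),y-1/2$. A colouring of $\pi\in\mathcal S_m$ is a map $\mathfrak c:[m]\to\mathbb Z_{\ge1}$; for $I=\{i_1<\dots<i_j\}$, $\mathrm{pat}_I(\sigma,\mathfrak c)=(\mathrm{pat}_I(\sigma),\mathfrak c')$ with $\mathfrak c'(\ell)=\mathfrak c(i_\ell)$, where $\mathrm{pat}_I(\sigma)$ is the permutation with entries in the same relative order as $\sigma(i_1),\dots,\sigma(i_j)$; $\mathrm{en}_j=\mathrm{pat}_{\{m-j+1,\dots,m\}}$. The RITMO colouring $\mathbb C(\sigma)$ processes indices in decreasing order of value, giving index $i$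 the smallest positive integer $c$ such that no already coloured index $j<i$ has colour $c$ (equivalently: colour 1 on left-to-right maxima, colour 2 on left-to-right maxima of the remaining entries, etc.); $\mathbb S(\sigma)=(\sigma,\mathbb C(\sigma))$. A coloured permutation $(\pi,\mathfrak c)$ with $\pi\in\mathrm{Av}_k(\searrow_n)$ is inherited if there is $\sigma\in\mathrm{Av}(\searrow_n)$ with $|\sigma|\ge k$ and $\mathrm{en}_k(\mathbb S(\sigma))=(\pi,\mathfrak c)$ (its colours then lie in $[n-1]$). For $y\in[|\pi|+1]$ and $f\ge1$, $(\pi,\mathfrak c)^{*(y,f)}=(\pi^{*y},\mathfrak c^{*f})$ where $\mathfrak c^{*f}$ agrees with $\mathfrak c$ on $[|\pi|]$ and gives colour $f$ to index $|\pi|+1$. An active site of an inherited $(\pi,\mathfrak c)$ is a pair $(y,f)$ with $y\in[|\pi|+1]$, $f\in[n-1]$, such that $(\pi,\mathfrak c)^{*(y,f)}$ is inherited. *)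

theory Defs
  imports Complex_Main
begin

text \<open>Permutations of [m] are lists of length m (one-line notation, entries 1..m);
  index i (1-based) corresponds to list position i-1. Colourings are lists of
  positive integers of the same length.\<close>

definition is_perm :: "nat list \<Rightarrow> bool" where
  "is_perm xs \<longleftrightarrow> distinct xs \<and> set xs = {1..length xs}"

definition contains_dec :: "nat \<Rightarrow> nat list \<Rightarrow> bool" where
  "contains_dec n \<sigma> \<longleftrightarrow> (\<exists>is. length is = n \<and> sorted_wrt (<) is \<and> (\<forall>i\<in>set is. i < length \<sigma>)
       \<and> sorted_wrt (>) (map (\<lambda>i. \<sigma> ! i) is))"

definition Av :: "nat \<Rightarrow> nat list set" where
  "Av n = {\<sigma>. is_perm \<sigma> \<and> \<not> contains_dec n \<sigma>}"

definition std :: "'a::linorder list \<Rightarrow> nat list" where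
  "std xs = map (\<lambda>x. card {z \<in> set xs. z \<le> x}) xs"

definition ins :: "nat list \<Rightarrow> nat \<Rightarrow> nat list" where
  "ins \<pi> y = std (map real \<pi> @ [real y - 1/2])"

text \<open>RITMO colouring: process values m, m-1, ..., 1; the index i of the current value
  gets the smallest c \<ge> 1 such that no already coloured index j < i has colour c.
  The auxiliary map gives colour 0 to not-yet-coloured indices (1-based).\<close>
fun ritmo_aux :: "nat list \<Rightarrow> nat \<Rightarrow> nat \<Rightarrow> nat" where
  "ritmo_aux \<sigma> 0 = (\<lambda>_. 0)"
| "ritmo_aux \<sigma> (Suc k) =
     (let col = ritmo_aux \<sigma> k;
          v = length \<sigma> - k;
          i = (THE i. 1 \<le> i \<and> i \<le> length \<sigma> \<and> \<sigma> ! (i - 1) = v)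
      in col(i := (LEAST c. 1 \<le> c \<and> (\<forall>j. 1 \<le> j \<and> j < i \<and> col j \<noteq> 0 \<longrightarrow> col j \<noteq> c))))"

definition ritmo :: "nat list \<Rightarrow> nat list" where
  "ritmo \<sigma> = map (ritmo_aux \<sigma> (length \<sigma>)) [1..<length \<sigma> + 1]"

definition en :: "nat \<Rightarrow> nat list \<times> nat list \<Rightarrow> nat list \<times> nat list" where
  "en k sc = (std (drop (length (fst sc) - k) (fst sc)), drop (length (fst sc) - k) (snd sc))"

definition inherited :: "nat \<Rightarrow> nat list \<Rightarrow> nat list \<Rightarrow> bool" where
  "inherited n \<pi> c \<longleftrightarrow> \<pi> \<in> Av n \<and>
     (\<exists>\<sigma>. \<sigma> \<in> Av n \<and> length \<sigma> \<ge> length \<pi> \<and> en (length \<pi>) (\<sigma>, ritmo \<sigma>) = (\<pi>, c))"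

definition active_site :: "nat \<Rightarrow> nat list \<Rightarrow> nat list \<Rightarrow> nat \<Rightarrow> nat \<Rightarrow> bool" where
  "active_site n \<pi> c y f \<longleftrightarrow> y \<in> {1..length \<pi> + 1} \<and> f \<in> {1..n - 1} \<and>
     inherited n (ins \<pi> y) (c @ [f])"

end

theory Submission
  imports Defs
begin

text \<open>The colour RITMO gives to a position is the least positive colour not used by any
  earlier larger entry. Hence an earlier larger entry always has a strictly smaller colour,
  and every smaller positive colour is carried by some earlier larger entry. Take a permutation
  realising the active site: the new entry is its last entry, with colour \<open>f\<close>, and
  the entries of \<open>\<pi>\<close> sit in the window just before it. Part (1) is the first fact.
  For (2) and (3), if \<open>\<pi>(i) < y\<close> then the colours \<open>\<fraktur>c(i)\<close> and
  \<open>f - 1\<close> lie in \<open>[\<fraktur>c(i), f)\<close>, so they are carried by entries larger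
  than the new one; such an entry cannot precede index \<open>i\<close>, since it would then be an
  earlier larger entry of \<open>i\<close> with colour below \<open>\<fraktur>c(i)\<close>.\<close>

lemma length_std [simp]: "length (std xs) = length xs"
  by (simp add: std_def)

lemma nth_std_less_iff:
  fixes xs :: "'a::linorder list"
  assumes "a < length xs" "b < length xs"
  shows "std xs ! a < std xs ! b \<longleftrightarrow> xs ! a < xs ! b"
proof -
  let ?below = "\<lambda>x. {z \<in> set xs. z \<le> x}"
  have nth_std: "\<And>t. t < length xs \<Longrightarrow> std xs ! t = card (?below (xs ! t))"
    by (simp add: std_def)
  have "card (?below (xs ! a)) < card (?below (xs ! b)) \<longleftrightarrow> xs ! a < xs ! b"
  proof
    assume less: "card (?below (xs ! a)) < card (?below (xs ! b))"
    show "xs ! a < xs ! b"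
    proof (rule ccontr)
      assume "\<not> xs ! a < xs ! b"
      then have "card (?below (xs ! b)) \<le> card (?below (xs ! a))"
        by (intro card_mono) auto
      with less show False
        by simp
    qed
  next
    assume less: "xs ! a < xs ! b"
    have "xs ! b \<in> ?below (xs ! b) - ?below (xs ! a)"
      using assms less by auto
    then have "?below (xs ! a) \<subset> ?below (xs ! b)"
      using less by auto
    then show "card (?below (xs ! a)) < card (?below (xs ! b))"
      by (intro psubset_card_mono) auto
  qed
  then show ?thesis
    using assms by (simp add: nth_std)
qed

lemma is_perm_nth_bounds: "is_perm s \<Longrightarrow> t < length s \<Longrightarrow> 1 \<le> s ! t \<and> s ! t \<le> length s"
  unfolding is_perm_def by (metis atLeastAtMost_iff nth_mem)

lemma is_perm_nth_inj: "is_perm s \<Longrightarrow> a < length s \<Longrightarrow> b < length s \<Longrightarrow> s ! a = s ! b \<Longrightarrow> a = b"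
  unfolding is_perm_def by (simp add: nth_eq_iff_index_eq)

lemma is_perm_position_exists:
  assumes "is_perm s" "1 \<le> v" "v \<le> length s"
  shows "\<exists>p. 1 \<le> p \<and> p \<le> length s \<and> s ! (p - 1) = v"
proof -
  have "v \<in> set s"
    using assms unfolding is_perm_def by auto
  then obtain t where "t < length s" "s ! t = v"
    by (metis in_set_conv_nth)
  then show ?thesis
    by (intro exI[of _ "Suc t"]) auto
qed

lemma ex_colour_avoiding:
  fixes g :: "nat \<Rightarrow> nat"
  shows "\<exists>c. 1 \<le> c \<and> (\<forall>j. 1 \<le> j \<and> j < p \<and> Q j \<longrightarrow> g j \<noteq> c)"
proof (intro exI[of _ "Suc (\<Sum>j<p. g j)"] conjI allI impI)
  fix j
  assume "1 \<le> j \<and> j < p \<and> Q j"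
  then have "g j \<le> (\<Sum>j<p. g j)"
    by (intro member_le_sum) auto
  then show "g j \<noteq> Suc (\<Sum>j<p. g j)"
    by simp
qed simp

declare ritmo_aux.simps(2) [simp del]

lemma ritmo_aux_Suc_at:
  assumes "is_perm s" "1 \<le> p" "p \<le> length s"
  defines "k \<equiv> length s - s ! (p - 1)"
  shows "ritmo_aux s (Suc k) = (ritmo_aux s k)(p :=
     (LEAST c. 1 \<le> c \<and> (\<forall>j. 1 \<le> j \<and> j < p \<and> ritmo_aux s k j \<noteq> 0 \<longrightarrow> ritmo_aux s k j \<noteq> c)))"
proof -
  have bounds: "1 \<le> s ! (p - 1) \<and> s ! (p - 1) \<le> length s"
    using is_perm_nth_bounds[OF assms(1), of "p - 1"] assms by auto
  have "(THE i. 1 \<le> i \<and> i \<le> length s \<and> s ! (i - 1) = length s - k) = p"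
  proof (rule the_equality)
    fix i
    assume i: "1 \<le> i \<and> i \<le> length s \<and> s ! (i - 1) = length s - k"
    then have "i - 1 = p - 1"
      using is_perm_nth_inj[OF assms(1), of "i - 1" "p - 1"] assms bounds by (auto simp: k_def)
    then show "i = p"
      using assms i by auto
  qed (use assms bounds in \<open>auto simp: k_def\<close>)
  then show ?thesis
    by (simp only: ritmo_aux.simps Let_def)
qed

lemma ritmo_aux_Suc_update:
  assumes "is_perm s" "k < length s"
  obtains p L where "1 \<le> p" "p \<le> length s" "s ! (p - 1) = length s - k" "1 \<le> L"
    "ritmo_aux s (Suc k) = (ritmo_aux s k)(p := L)"
proof -
  have "1 \<le> length s - k"
    using assms(2) by simp
  then obtain p where p: "1 \<le> p" "p \<le> length s" "s ! (p - 1) = length s - k"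
    using is_perm_position_exists[OF assms(1), of "length s - k"] by auto
  have "k = length s - s ! (p - 1)"
    using p assms by auto
  then show ?thesis
    using that[OF p] ritmo_aux_Suc_at[OF assms(1) p(1,2)]
      LeastI_ex[OF ex_colour_avoiding[of p "\<lambda>j. ritmo_aux s k j \<noteq> 0" "ritmo_aux s k"]]
    by auto
qed

lemma ritmo_aux_nonzero_iff:
  assumes "is_perm s" "k \<le> length s"
  shows "ritmo_aux s k p \<noteq> 0 \<longleftrightarrow> 1 \<le> p \<and> p \<le> length s \<and> length s - k < s ! (p - 1)"
  using assms(2)
proof (induction k arbitrary: p)
  case 0
  have "s ! (p - 1) \<le> length s" if "1 \<le> p" "p \<le> length s"
    using is_perm_nth_bounds[OF assms(1), of "p - 1"] that by simp
  then show ?case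
    by auto
next
  case (Suc k)
  then have "k < length s"
    by simp
  then obtain p0 L where p0: "1 \<le> p0" "p0 \<le> length s" "s ! (p0 - 1) = length s - k" "1 \<le> L"
    and update: "ritmo_aux s (Suc k) = (ritmo_aux s k)(p0 := L)"
    by (rule ritmo_aux_Suc_update[OF assms(1)])
  show ?case
  proof (cases "p = p0")
    case False
    have not_new: "s ! (p - 1) \<noteq> length s - k" if "1 \<le> p" "p \<le> length s"
    proof
      assume new: "s ! (p - 1) = length s - k"
      have "p - 1 = p0 - 1"
        by (rule is_perm_nth_inj[OF assms(1)]) (use that p0 new in auto)
      with that p0(1) False show False
        by simp
    qed
    have "length s - k < s ! (p - 1) \<longleftrightarrow> length s - Suc k < s ! (p - 1)"
      if "1 \<le> p" "p \<le> length s"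
      using not_new[OF that] \<open>k < length s\<close> by linarith
    moreover have "ritmo_aux s (Suc k) p = ritmo_aux s k p"
      using update False by simp
    ultimately show ?thesis
      using Suc.IH[of p] Suc.prems by (simp only: Suc_leD) blast
  qed (use p0 Suc.prems update in auto)
qed

lemma ritmo_aux_stable:
  assumes "is_perm s" "k \<le> k'" "k' \<le> length s" "ritmo_aux s k p \<noteq> 0"
  shows "ritmo_aux s k' p = ritmo_aux s k p"
  using assms(2,3)
proof (induction k' rule: dec_induct)
  case (step k'')
  have "k'' < length s"
    using step by simp
  then obtain p0 L where "1 \<le> p0" "p0 \<le> length s" and p0: "s ! (p0 - 1) = length s - k''"
    and "1 \<le> L" and update: "ritmo_aux s (Suc k'') = (ritmo_aux s k'')(p0 := L)"
    by (rule ritmo_aux_Suc_update[OF assms(1)])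
  have IH: "ritmo_aux s k'' p = ritmo_aux s k p"
    using step by auto
  then have "length s - k'' < s ! (p - 1)"
    using ritmo_aux_nonzero_iff[OF assms(1), of k'' p] step assms(4) by auto
  then show ?case
    using p0 update IH by (cases "p = p0") auto
qed simp

text \<open>Positions are 1-based, as in \<^const>\<open>ritmo_aux\<close>: the entry at position \<open>p\<close>
  is \<open>s ! (p - 1)\<close>.\<close>

definition ritmo_colour :: "nat list \<Rightarrow> nat \<Rightarrow> nat" where
  "ritmo_colour s p = ritmo_aux s (length s) p"

lemma length_ritmo [simp]: "length (ritmo s) = length s"
  by (simp add: ritmo_def del: upt_Suc)

lemma nth_ritmo: "t < length s \<Longrightarrow> ritmo s ! t = ritmo_colour s (Suc t)"
  by (simp add: ritmo_def ritmo_colour_def nth_upt del: upt_Suc)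

lemma ritmo_colour_eq_Least:
  assumes "is_perm s" "1 \<le> p" "p \<le> length s"
  shows "ritmo_colour s p =
    (LEAST c. 1 \<le> c \<and> (\<forall>j. 1 \<le> j \<and> j < p \<and> s ! (j - 1) > s ! (p - 1) \<longrightarrow> ritmo_colour s j \<noteq> c))"
proof -
  define k where "k = length s - s ! (p - 1)"
  have bounds: "1 \<le> s ! (p - 1) \<and> s ! (p - 1) \<le> length s"
    using is_perm_nth_bounds[OF assms(1), of "p - 1"] assms by auto
  then have k: "Suc k \<le> length s" "length s - Suc k < s ! (p - 1)"
    by (auto simp: k_def)
  have coloured: "ritmo_aux s (Suc k) p \<noteq> 0"
    using ritmo_aux_nonzero_iff[OF assms(1) k(1), of p] assms k(2) by auto
  have coloured_before: "ritmo_aux s k j \<noteq> 0 \<longleftrightarrow> s ! (j - 1) > s ! (p - 1)"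
    if "1 \<le> j" "j < p" for j
  proof -
    have "k \<le> length s" "length s - k = s ! (p - 1)"
      using k(1) bounds by (auto simp: k_def)
    then show ?thesis
      using ritmo_aux_nonzero_iff[OF assms(1), of k j] assms(3) that by simp
  qed
  have final: "ritmo_aux s k j = ritmo_colour s j" if "ritmo_aux s k j \<noteq> 0" for j
    unfolding ritmo_colour_def using ritmo_aux_stable[OF assms(1), of k "length s"] k that by simp
  have "ritmo_colour s p = ritmo_aux s (Suc k) p"
    unfolding ritmo_colour_def using ritmo_aux_stable[OF assms(1), of "Suc k" "length s"] k coloured by simp
  also have "\<dots> = (LEAST c. 1 \<le> c \<and> (\<forall>j. 1 \<le> j \<and> j < p \<and> ritmo_aux s k j \<noteq> 0 \<longrightarrow> ritmo_aux s k j \<noteq> c))"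
    using ritmo_aux_Suc_at[OF assms] by (simp add: k_def)
  also have "\<dots> = (LEAST c. 1 \<le> c \<and> (\<forall>j. 1 \<le> j \<and> j < p \<and> s ! (j - 1) > s ! (p - 1) \<longrightarrow> ritmo_colour s j \<noteq> c))"
    by (intro arg_cong[where f = Least] ext) (use coloured_before final in fastforce)
  finally show ?thesis .
qed

lemma ritmo_colour_pos:
  assumes "is_perm s" "1 \<le> p" "p \<le> length s"
  shows "1 \<le> ritmo_colour s p"
  using LeastI_ex[OF ex_colour_avoiding[of p "\<lambda>j. s ! (j - 1) > s ! (p - 1)" "ritmo_colour s"]]
    ritmo_colour_eq_Least[OF assms] by simp

lemma ritmo_colour_ne_earlier_larger:
  assumes "is_perm s" "1 \<le> p" "p \<le> length s" "1 \<le> q" "q < p" "s ! (q - 1) > s ! (p - 1)"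
  shows "ritmo_colour s q \<noteq> ritmo_colour s p"
  using LeastI_ex[OF ex_colour_avoiding[of p "\<lambda>j. s ! (j - 1) > s ! (p - 1)" "ritmo_colour s"]]
    ritmo_colour_eq_Least[OF assms(1-3)] assms(4-6) by auto

lemma ritmo_colour_smaller_attained:
  assumes "is_perm s" "1 \<le> p" "p \<le> length s" "1 \<le> c" "c < ritmo_colour s p"
  shows "\<exists>j. 1 \<le> j \<and> j < p \<and> s ! (j - 1) > s ! (p - 1) \<and> ritmo_colour s j = c"
  using not_less_Least[of c "\<lambda>c. 1 \<le> c \<and> (\<forall>j. 1 \<le> j \<and> j < p \<and> s ! (j - 1) > s ! (p - 1)
      \<longrightarrow> ritmo_colour s j \<noteq> c)"] ritmo_colour_eq_Least[OF assms(1-3)] assms(4,5)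
  by auto

lemma ritmo_colour_less_earlier_larger:
  assumes "is_perm s" "1 \<le> p" "p \<le> length s" "1 \<le> q" "q < p" "s ! (q - 1) > s ! (p - 1)"
  shows "ritmo_colour s q < ritmo_colour s p"
proof (rule ccontr)
  assume "\<not> ritmo_colour s q < ritmo_colour s p"
  moreover have "ritmo_colour s q \<noteq> ritmo_colour s p"
    using ritmo_colour_ne_earlier_larger[OF assms] .
  ultimately have "ritmo_colour s p < ritmo_colour s q"
    by simp
  then obtain r where "1 \<le> r" "r < q" "s ! (r - 1) > s ! (q - 1)"
      and "ritmo_colour s r = ritmo_colour s p"
    using ritmo_colour_smaller_attained[OF assms(1,4) _ ritmo_colour_pos[OF assms(1-3)]] assms
    by auto
  then show False
    using ritmo_colour_ne_earlier_larger[OF assms(1-3), of r] assms by auto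
qed

lemma ritmo_colour_witness_between:
  assumes "is_perm s" "1 \<le> q" "q < p" "p \<le> length s" "s ! (q - 1) < s ! (p - 1)"
    and "ritmo_colour s q \<le> c" "c < ritmo_colour s p"
  shows "\<exists>j. q < j \<and> j < p \<and> s ! (j - 1) > s ! (p - 1) \<and> ritmo_colour s j = c"
proof -
  have "1 \<le> c"
    using ritmo_colour_pos[OF assms(1,2)] assms by linarith
  then obtain j where j: "1 \<le> j" "j < p" "s ! (j - 1) > s ! (p - 1)" "ritmo_colour s j = c"
    using ritmo_colour_smaller_attained[OF assms(1) _ assms(4)] assms by auto
  have "q < j"
  proof (rule ccontr)
    assume "\<not> q < j"
    moreover have "j \<noteq> q"
      using j(3) assms(5) by auto
    ultimately have "ritmo_colour s j < ritmo_colour s q"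
      using ritmo_colour_less_earlier_larger[OF assms(1,2) _ j(1)] j(3) assms by auto
    then show False
      using j(4) assms(6) by simp
  qed
  then show ?thesis
    using j by blast
qed

lemma active_site_realisation:
  assumes "active_site n \<pi> c y f"
  obtains s d where "is_perm s" "length s = d + length \<pi> + 1"
    "\<And>t. t < length \<pi> \<Longrightarrow> c ! t = ritmo_colour s (d + t + 1)"
    "f = ritmo_colour s (length s)"
    "\<And>a. a < length \<pi> \<Longrightarrow> s ! (d + a) < s ! (d + length \<pi>) \<longleftrightarrow> \<pi> ! a < y"
    "\<And>a. a < length \<pi> \<Longrightarrow> s ! (d + length \<pi>) < s ! (d + a) \<longleftrightarrow> y \<le> \<pi> ! a"
proof -
  define K where "K = length \<pi>"
  obtain s where s: "s \<in> Av n" "K + 1 \<le> length s"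
    and en_s: "en (K + 1) (s, ritmo s) = (ins \<pi> y, c @ [f])"
    using assms unfolding active_site_def inherited_def by (auto simp: ins_def K_def)
  define d where "d = length s - (K + 1)"
  have len_s: "length s = d + K + 1"
    using s(2) by (simp add: d_def)
  have window: "std (drop d s) = ins \<pi> y" and colours: "drop d (ritmo s) = c @ [f]"
    using en_s unfolding en_def d_def by (auto simp: ritmo_def)
  have len_c: "length c = K"
    using arg_cong[OF colours, of length] len_s by simp
  have colour_at: "(c @ [f]) ! t = ritmo_colour s (d + t + 1)" if "t \<le> K" for t
    using that len_s nth_ritmo[of "d + t" s] colours[symmetric] by simp
  let ?L = "map real \<pi> @ [real y - 1/2]"
  have order: "s ! (d + a) < s ! (d + b) \<longleftrightarrow> ?L ! a < ?L ! b" if "a \<le> K" "b \<le> K" for a b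
    using nth_std_less_iff[of a "drop d s" b] nth_std_less_iff[of a ?L b] that len_s window
    by (simp add: ins_def K_def less_Suc_eq_le)
  show ?thesis
  proof (rule that[OF _ len_s[unfolded K_def]])
    show "is_perm s"
      using s(1) by (simp add: Av_def)
    show "c ! t = ritmo_colour s (d + t + 1)" if "t < length \<pi>" for t
      using colour_at[of t] that len_c by (simp add: K_def nth_append)
    show "f = ritmo_colour s (length s)"
      using colour_at[of K] len_c len_s by (simp add: nth_append)
    show "s ! (d + a) < s ! (d + length \<pi>) \<longleftrightarrow> \<pi> ! a < y" if "a < length \<pi>" for a
      using order[of a K] that by (simp add: K_def nth_append) linarith
    show "s ! (d + length \<pi>) < s ! (d + a) \<longleftrightarrow> y \<le> \<pi> ! a" if "a < length \<pi>" for a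
      using order[of K a] that by (simp add: K_def nth_append) linarith
  qed
qed

lemma active_site_colour_ge_imp_below:
  assumes "active_site n \<pi> c y f" "1 \<le> i" "i \<le> length \<pi>" "f \<le> c ! (i - 1)"
  shows "\<pi> ! (i - 1) < y"
proof (rule ccontr)
  assume "\<not> \<pi> ! (i - 1) < y"
  obtain s d where perm: "is_perm s" and len_s: "length s = d + length \<pi> + 1"
    and colour: "\<And>t. t < length \<pi> \<Longrightarrow> c ! t = ritmo_colour s (d + t + 1)"
    and f: "f = ritmo_colour s (length s)"
    and "\<And>a. a < length \<pi> \<Longrightarrow> s ! (d + a) < s ! (d + length \<pi>) \<longleftrightarrow> \<pi> ! a < y"
    and above: "\<And>a. a < length \<pi> \<Longrightarrow> s ! (d + length \<pi>) < s ! (d + a) \<longleftrightarrow> y \<le> \<pi> ! a"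
    using active_site_realisation[OF assms(1)] by blast
  have "s ! (length s - 1) < s ! (d + i - 1)"
    using above[of "i - 1"] \<open>\<not> \<pi> ! (i - 1) < y\<close> assms(2,3) len_s by simp
  then have "ritmo_colour s (d + i) < f"
    unfolding f using ritmo_colour_less_earlier_larger[OF perm, of "length s" "d + i"] assms(2,3) len_s
    by simp
  moreover have "c ! (i - 1) = ritmo_colour s (d + i)"
    using colour[of "i - 1"] assms(2,3) by simp
  ultimately show False
    using assms(4) by simp
qed

lemma active_site_colour_attained_above:
  assumes "active_site n \<pi> c y f" "1 \<le> i" "i \<le> length \<pi>" "\<pi> ! (i - 1) < y"
    and "c ! (i - 1) \<le> e" "e < f"
  shows "\<exists>k. i < k \<and> k \<le> length \<pi> \<and> y \<le> \<pi> ! (k - 1) \<and> c ! (k - 1) = e"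
proof -
  obtain s d where perm: "is_perm s" and len_s: "length s = d + length \<pi> + 1"
    and colour: "\<And>t. t < length \<pi> \<Longrightarrow> c ! t = ritmo_colour s (d + t + 1)"
    and f: "f = ritmo_colour s (length s)"
    and below: "\<And>a. a < length \<pi> \<Longrightarrow> s ! (d + a) < s ! (d + length \<pi>) \<longleftrightarrow> \<pi> ! a < y"
    and above: "\<And>a. a < length \<pi> \<Longrightarrow> s ! (d + length \<pi>) < s ! (d + a) \<longleftrightarrow> y \<le> \<pi> ! a"
    using active_site_realisation[OF assms(1)] by blast
  have "c ! (i - 1) = ritmo_colour s (d + i)"
    using colour[of "i - 1"] assms(2,3) by simp
  moreover have "s ! (d + i - 1) < s ! (length s - 1)"
    using below[of "i - 1"] assms(2-4) len_s by simp
  ultimately obtain j where j: "d + i < j" "j < length s" "s ! (j - 1) > s ! (length s - 1)"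
    "ritmo_colour s j = e"
    using ritmo_colour_witness_between[OF perm, of "d + i" "length s" e] assms(2,3,5,6) f len_s
    by auto
  define k where "k = j - d"
  have k: "i < k" "k \<le> length \<pi>" "j = d + (k - 1) + 1"
    using j(1,2) len_s by (auto simp: k_def)
  have "y \<le> \<pi> ! (k - 1)"
    using above[of "k - 1"] j(3) k len_s by simp
  moreover have "c ! (k - 1) = e"
    using colour[of "k - 1"] j(4) k by simp
  ultimately show ?thesis
    using k by blast
qed

theorem mainTheorem14:
  fixes n y f i :: nat and \<pi> c :: "nat list"
  assumes "n \<ge> 2"
    and "inherited n \<pi> c"
    and "active_site n \<pi> c y f"
    and "i \<in> {1..length \<pi>}"
  shows "(c ! (i - 1) \<ge> f \<longrightarrow> y > \<pi> ! (i - 1))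
       \<and> (\<pi> ! (i - 1) < y \<and> c ! (i - 1) < f \<longrightarrow>
            (\<exists>k. i < k \<and> k \<le> length \<pi> \<and> \<pi> ! (k - 1) \<ge> y \<and> c ! (k - 1) = c ! (i - 1)))
       \<and> (\<pi> ! (i - 1) < y \<and> c ! (i - 1) < f \<longrightarrow>
            (\<exists>h. i < h \<and> h \<le> length \<pi> \<and> \<pi> ! (h - 1) \<ge> y \<and> c ! (h - 1) = f - 1))"
  using active_site_colour_ge_imp_below[OF assms(3)]
    active_site_colour_attained_above[OF assms(3), of i "c ! (i - 1)"]
    active_site_colour_attained_above[OF assms(3), of i "f - 1"] assms(4)
  by auto

end
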